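(* Let $p,m,n\in\mathbb{R}$, $a,b,c\in\mathbb{O}$, and $$\mathcal{A}=\begin{pmatrix}p&a&\overline{b}\\ \overline{a}&m&c\\ b&\overline{c}&n\end{pmatrix}.$$ Suppose $v=(x,y,z)^T\in\mathbb{O}^3$ and $\lambda\in\mathbb{O}$ satisfy $\mathcal{A}v=v\lambda$. Then $$\begin{aligned} z\big(\lambda^3-(\mathrm{tr}\,\mathcal{A})\lambda^2+\sigma(\mathcal{A})\lambda-\det\mathcal{A}\big) &= b\big(a(cz)\big)+\overline{c}\big(\overline{a}(\overline{b}z)\big)-\big(b(ac)+(\overline{c}\,\overline{a})\overline{b}\big)z\\ &\quad + b\,[a,y,\lambda]+[b,ay,\lambda]+[b,x,\lambda](\lambda-m)\\ &\quad + \overline{c}\,[\overline{a},x,\lambda]+[\overline{c},\overline{a}x,\lambda]+[\overline{c},y,\lambda](\lambda-p), \end{aligned}$$ where $\mathrm{tr}\,\mathcal{A}=p+m+n$, $\sigma(\mathcal{A})=pm+pn+mn-|a|^2-|b|^2-|c|^2$, and $\det\mathcal{A}=pmn+b(ac)+\overline{b(ac)}-n|a|^2-m|b|^2-p|c|^2$.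
   Context: $\mathbb{O}$ denotes the octonions, $\overline{a}$ octonionic conjugation, $|a|$ the norm, $[a,b,c]=(ab)c-a(bc)$ the associator. Powers $\lambda^2,\lambda^3$ of a single octonion are unambiguous. Matrix–vector products are computed entrywise with octonionic multiplication; $v\lambda$ means each component of $v$ multiplied on the right by $\lambda$. *)

theory Defs
  imports Complex_Main
begin

text \<open>Octonions via the Cayley--Dickson construction:
  quaternions are pairs of complex numbers, octonions are pairs of quaternions,
  with product (a,b)(c,d) = (a c - conj(d) b, d a + b conj(c))
  and conjugation conj(a,b) = (conj a, -b).\<close>

datatype quat = Quat complex complex

fun qconj :: "quat \<Rightarrow> quat" where
  "qconj (Quat a b) = Quat (cnj a) (- b)"

instantiation quat :: "{zero, one, plus, minus, uminus, times, power}"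
begin
definition "0 = Quat 0 0"
definition "1 = Quat 1 0"
fun plus_quat where "Quat a b + Quat c d = Quat (a + c) (b + d)"
fun minus_quat where "Quat a b - Quat c d = Quat (a - c) (b - d)"
fun uminus_quat where "- Quat a b = Quat (- a) (- b)"
fun times_quat where
  "Quat a b * Quat c d = Quat (a * c - cnj d * b) (d * a + b * cnj c)"
instance ..
end

fun qnormsq :: "quat \<Rightarrow> real" where
  "qnormsq (Quat a b) = (cmod a)\<^sup>2 + (cmod b)\<^sup>2"

datatype oct = Oct quat quat

fun oconj :: "oct \<Rightarrow> oct" where
  "oconj (Oct a b) = Oct (qconj a) (- b)"

instantiation oct :: "{zero, one, plus, minus, uminus, times, power}"
begin
definition "0 = Oct 0 0"
definition "1 = Oct 1 0"
fun plus_oct where "Oct a b + Oct c d = Oct (a + c) (b + d)"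
fun minus_oct where "Oct a b - Oct c d = Oct (a - c) (b - d)"
fun uminus_oct where "- Oct a b = Oct (- a) (- b)"
fun times_oct where
  "Oct a b * Oct c d = Oct (a * c - qconj d * b) (d * a + b * qconj c)"
instance ..
end

definition oreal :: "real \<Rightarrow> oct" where
  "oreal r = Oct (Quat (complex_of_real r) 0) 0"

fun onorm :: "oct \<Rightarrow> real" where
  "onorm (Oct a b) = sqrt (qnormsq a + qnormsq b)"

definition assoc :: "oct \<Rightarrow> oct \<Rightarrow> oct \<Rightarrow> oct" where
  "assoc a b c = (a * b) * c - a * (b * c)"

end

theory Submission
  imports Defs
begin

text \<open>Right-multiply the third eigen-equation \<open>z\<lambda> = bx + conj(c)y + nz\<close> twice more by
  \<open>\<lambda>\<close>. Each product \<open>(uv)\<lambda>\<close> is rewritten as \<open>u(v\<lambda>) + [u,v,\<lambda>]\<close>, then \<open>v\<lambda>\<close> is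
  replaced using the eigen-equations, and the identities \<open>u(conj(u)w) = conj(u)(uw) = |u|\<^sup>2w\<close>
  collapse terms such as \<open>b(conj(b)z)\<close>. By alternativity \<open>((z\<lambda>)\<lambda>)\<lambda> = z\<lambda>\<^sup>3\<close>, so the
  expansions assemble into \<open>z\<close> times the characteristic polynomial at \<open>\<lambda>\<close>; what remains are
  the associators and the products of \<open>a, b, c\<close> with \<open>z\<close> that cannot be reassociated.
  The octonionic part \<open>b(ac) + conj(b(ac))\<close> of \<open>det \<A>\<close> is real, hence commutes with \<open>z\<close>.\<close>

lemma oct_coords_cases:
  obtains r1 r2 r3 r4 r5 r6 r7 r8
  where "x = Oct (Quat (Complex r1 r2) (Complex r3 r4)) (Quat (Complex r5 r6) (Complex r7 r8))"
  by (metis complex.exhaust quat.exhaust oct.exhaust)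

lemmas oct_coords_simps =
  zero_oct_def one_oct_def zero_quat_def one_quat_def oreal_def complex_eq_iff

instantiation oct :: real_vector
begin

definition scaleR_oct :: "real \<Rightarrow> oct \<Rightarrow> oct" where
  "scaleR_oct r x = oreal r * x"

instance proof
  fix r s :: real and u v w :: oct
  show "u + v + w = u + (v + w)"
    by (cases u rule: oct_coords_cases; cases v rule: oct_coords_cases;
        cases w rule: oct_coords_cases; simp add: oct_coords_simps)
  show "u + v = v + u"
    by (cases u rule: oct_coords_cases; cases v rule: oct_coords_cases; simp add: oct_coords_simps)
  show "0 + u = u"
    by (cases u rule: oct_coords_cases; simp add: oct_coords_simps)
  show "- u + u = 0"
    by (cases u rule: oct_coords_cases; simp add: oct_coords_simps)
  show "u - v = u + - v"
    by (cases u rule: oct_coords_cases; cases v rule: oct_coords_cases; simp add: oct_coords_simps)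
  show "r *\<^sub>R (u + v) = r *\<^sub>R u + r *\<^sub>R v"
    by (cases u rule: oct_coords_cases; cases v rule: oct_coords_cases;
        simp add: scaleR_oct_def oct_coords_simps algebra_simps)
  show "(r + s) *\<^sub>R u = r *\<^sub>R u + s *\<^sub>R u"
    by (cases u rule: oct_coords_cases; simp add: scaleR_oct_def oct_coords_simps algebra_simps)
  show "r *\<^sub>R s *\<^sub>R u = (r * s) *\<^sub>R u"
    by (cases u rule: oct_coords_cases; simp add: scaleR_oct_def oct_coords_simps algebra_simps)
  show "1 *\<^sub>R u = u"
    by (cases u rule: oct_coords_cases; simp add: scaleR_oct_def oct_coords_simps)
qed

end

lemma oreal_mult_eq_scaleR: "oreal r * x = r *\<^sub>R x"
  by (simp add: scaleR_oct_def)

lemma mult_oreal_eq_scaleR: "x * oreal r = r *\<^sub>R x"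
  by (cases x rule: oct_coords_cases; simp add: scaleR_oct_def oct_coords_simps)

lemma oct_distrib_left: "x * (y + z) = x * y + x * (z::oct)"
  by (cases x rule: oct_coords_cases; cases y rule: oct_coords_cases;
      cases z rule: oct_coords_cases; simp add: oct_coords_simps algebra_simps)

lemma oct_distrib_right: "(x + y) * z = x * z + y * (z::oct)"
  by (cases x rule: oct_coords_cases; cases y rule: oct_coords_cases;
      cases z rule: oct_coords_cases; simp add: oct_coords_simps algebra_simps)

lemma oct_right_diff_distrib: "x * (y - z) = x * y - x * (z::oct)"
  by (cases x rule: oct_coords_cases; cases y rule: oct_coords_cases;
      cases z rule: oct_coords_cases; simp add: oct_coords_simps algebra_simps)

lemma oct_left_diff_distrib: "(x - y) * z = x * z - y * (z::oct)"
  by (cases x rule: oct_coords_cases; cases y rule: oct_coords_cases;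
      cases z rule: oct_coords_cases; simp add: oct_coords_simps algebra_simps)

lemma oct_mult_scaleR_left: "(r *\<^sub>R x) * y = r *\<^sub>R (x * (y::oct))"
  by (cases x rule: oct_coords_cases; cases y rule: oct_coords_cases;
      simp add: scaleR_oct_def oct_coords_simps algebra_simps)

lemma oct_mult_scaleR_right: "x * (r *\<^sub>R y) = r *\<^sub>R (x * (y::oct))"
  by (cases x rule: oct_coords_cases; cases y rule: oct_coords_cases;
      simp add: scaleR_oct_def oct_coords_simps algebra_simps)

lemmas oct_distribs =
  oct_distrib_left oct_distrib_right oct_right_diff_distrib oct_left_diff_distrib
  oct_mult_scaleR_left oct_mult_scaleR_right

lemma oct_mult_1_right: "x * (1::oct) = x"
  by (cases x rule: oct_coords_cases; simp add: oct_coords_simps)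

lemma oconj_mult: "oconj (x * y) = oconj y * oconj x"
  by (cases x rule: oct_coords_cases; cases y rule: oct_coords_cases;
      simp add: oct_coords_simps algebra_simps)

lemma mult_add_oconj_commute: "z * (w + oconj w) = (w + oconj w) * z"
  by (cases z rule: oct_coords_cases; cases w rule: oct_coords_cases;
      simp add: oct_coords_simps algebra_simps)

lemma mult_oconj_mult: "u * (oconj u * z) = (onorm u)\<^sup>2 *\<^sub>R z"
  by (cases u rule: oct_coords_cases; cases z rule: oct_coords_cases;
      simp add: scaleR_oct_def oct_coords_simps cmod_power2; simp add: algebra_simps power2_eq_square)

lemma oconj_mult_mult: "oconj u * (u * z) = (onorm u)\<^sup>2 *\<^sub>R z"
  by (cases u rule: oct_coords_cases; cases z rule: oct_coords_cases;
      simp add: scaleR_oct_def oct_coords_simps cmod_power2; simp add: algebra_simps power2_eq_square)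

lemma oct_right_alternative: "(z * l) * l = z * (l * (l::oct))"
  by (cases z rule: oct_coords_cases; cases l rule: oct_coords_cases;
      simp add: oct_coords_simps algebra_simps)

lemma oct_square_right_assoc: "(z * (l * l)) * l = z * (l * (l * (l::oct)))"
  by (cases z rule: oct_coords_cases; cases l rule: oct_coords_cases;
      simp add: oct_coords_simps algebra_simps)

lemma mult_real_cubic:
  "z * (l ^ 3 - oreal t * l ^ 2 + oreal s * l - d)
     = ((z * l) * l) * l - t *\<^sub>R ((z * l) * l) + s *\<^sub>R (z * l) - z * d"
proof -
  have "l ^ 2 = l * l" "l ^ 3 = l * (l * l)"
    by (simp_all add: numeral_2_eq_2 numeral_3_eq_3 oct_mult_1_right)
  then show ?thesis
    by (simp add: oct_right_alternative oct_square_right_assoc oreal_mult_eq_scaleR oct_distribs)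
qed

lemma mult_eq_mult_assoc: "(u * v) * w = u * (v * w) + assoc u v w"
  by (simp add: assoc_def)

locale oct_eigenvector =
  fixes p m n :: real and a b c x y z l :: oct
  assumes eq1: "oreal p * x + a * y + oconj b * z = x * l"
      and eq2: "oconj a * x + oreal m * y + c * z = y * l"
      and eq3: "b * x + oconj c * y + oreal n * z = z * l"
begin

lemma x_mult: "x * l = p *\<^sub>R x + a * y + oconj b * z"
  using eq1 by (simp add: oreal_mult_eq_scaleR)

lemma y_mult: "y * l = oconj a * x + m *\<^sub>R y + c * z"
  using eq2 by (simp add: oreal_mult_eq_scaleR)

lemma z_mult: "z * l = b * x + oconj c * y + n *\<^sub>R z"
  using eq3 by (simp add: oreal_mult_eq_scaleR)

lemma bx_mult: "(b * x) * l = p *\<^sub>R (b * x) + b * (a * y) + (onorm b)\<^sup>2 *\<^sub>R z + assoc b x l"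
  by (simp only: mult_eq_mult_assoc x_mult oct_distribs mult_oconj_mult)

lemma cy_mult:
  "(oconj c * y) * l
     = oconj c * (oconj a * x) + m *\<^sub>R (oconj c * y) + (onorm c)\<^sup>2 *\<^sub>R z + assoc (oconj c) y l"
  by (simp only: mult_eq_mult_assoc y_mult oct_distribs oconj_mult_mult)

lemma ay_mult: "(a * y) * l = (onorm a)\<^sup>2 *\<^sub>R x + m *\<^sub>R (a * y) + a * (c * z) + assoc a y l"
  by (simp only: mult_eq_mult_assoc y_mult oct_distribs mult_oconj_mult)

lemma ax_mult:
  "(oconj a * x) * l
     = p *\<^sub>R (oconj a * x) + (onorm a)\<^sup>2 *\<^sub>R y + oconj a * (oconj b * z) + assoc (oconj a) x l"
  by (simp only: mult_eq_mult_assoc x_mult oct_distribs oconj_mult_mult)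

lemma bay_mult:
  "(b * (a * y)) * l = (onorm a)\<^sup>2 *\<^sub>R (b * x) + m *\<^sub>R (b * (a * y)) + b * (a * (c * z))
     + b * assoc a y l + assoc b (a * y) l"
  by (simp only: mult_eq_mult_assoc[of b "a * y"] ay_mult oct_distribs)

lemma cax_mult:
  "(oconj c * (oconj a * x)) * l = p *\<^sub>R (oconj c * (oconj a * x)) + (onorm a)\<^sup>2 *\<^sub>R (oconj c * y)
     + oconj c * (oconj a * (oconj b * z)) + oconj c * assoc (oconj a) x l
     + assoc (oconj c) (oconj a * x) l"
  by (simp only: mult_eq_mult_assoc[of "oconj c" "oconj a * x"] ax_mult oct_distribs)

lemma z_mult_mult: "(z * l) * l = (b * x) * l + (oconj c * y) * l + n *\<^sub>R (z * l)"
  by (simp only: z_mult oct_distribs)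

lemma z_mult_mult_mult:
  "((z * l) * l) * l = ((b * x) * l) * l + ((oconj c * y) * l) * l + n *\<^sub>R ((z * l) * l)"
  by (simp only: z_mult_mult oct_distribs)

lemma bx_mult_mult:
  "((b * x) * l) * l = p *\<^sub>R ((b * x) * l) + (b * (a * y)) * l + (onorm b)\<^sup>2 *\<^sub>R (z * l)
     + assoc b x l * l"
  by (simp only: bx_mult oct_distribs)

lemma cy_mult_mult:
  "((oconj c * y) * l) * l = (oconj c * (oconj a * x)) * l + m *\<^sub>R ((oconj c * y) * l)
     + (onorm c)\<^sup>2 *\<^sub>R (z * l) + assoc (oconj c) y l * l"
  by (simp only: cy_mult oct_distribs)

end

theorem mainTheorem4:
  fixes p m n :: real and a b c x y z l :: oct
  assumes eq1: "oreal p * x + a * y + oconj b * z = x * l"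
      and eq2: "oconj a * x + oreal m * y + c * z = y * l"
      and eq3: "b * x + oconj c * y + oreal n * z = z * l"
  shows "(let trA = p + m + n;
              sigmaA = p*m + p*n + m*n - (onorm a)\<^sup>2 - (onorm b)\<^sup>2 - (onorm c)\<^sup>2;
              detA = oreal (p*m*n) + b * (a * c) + oconj (b * (a * c))
                     - oreal (n * (onorm a)\<^sup>2) - oreal (m * (onorm b)\<^sup>2)
                     - oreal (p * (onorm c)\<^sup>2)
          in z * (l ^ 3 - oreal trA * l ^ 2 + oreal sigmaA * l - detA)
             = b * (a * (c * z)) + oconj c * (oconj a * (oconj b * z))
               - (b * (a * c) + (oconj c * oconj a) * oconj b) * z
               + b * assoc a y l + assoc b (a * y) l + assoc b x l * (l - oreal m)
               + oconj c * assoc (oconj a) x l + assoc (oconj c) (oconj a * x) l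
               + assoc (oconj c) y l * (l - oreal p))"
proof -
  interpret oct_eigenvector p m n a b c x y z l
    using assms by unfold_locales
  let ?W = "b * (a * c)"
  have z_mult_det:
    "z * (oreal (p*m*n) + ?W + oconj ?W - oreal (n * (onorm a)\<^sup>2) - oreal (m * (onorm b)\<^sup>2)
          - oreal (p * (onorm c)\<^sup>2))
       = (p*m*n - n * (onorm a)\<^sup>2 - m * (onorm b)\<^sup>2 - p * (onorm c)\<^sup>2) *\<^sub>R z
         + (?W + (oconj c * oconj a) * oconj b) * z"
    using mult_add_oconj_commute[of z ?W]
    by (simp add: oconj_mult oct_distribs mult_oreal_eq_scaleR algebra_simps)
  \<comment> \<open>Unfold outer products before inner ones, so that \<open>z * l\<close> is not expanded inside \<open>(z * l) * l\<close>.\<close>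
  show ?thesis
    unfolding Let_def mult_real_cubic z_mult_det
    unfolding z_mult_mult_mult
    unfolding bx_mult_mult cy_mult_mult z_mult_mult
    unfolding bx_mult cy_mult bay_mult cax_mult
    unfolding z_mult
    by (simp add: oct_distribs mult_oreal_eq_scaleR algebra_simps)
qed

end
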